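(* Let $\boldsymbol{\lambda}\in\Delta_N$, $\boldsymbol{\nu}=(\nu_1,\dots,\nu_N)\in\mathcal{P}_1(\mathbb{R})^N$, $\theta\in[0,1]$, $\nu^\theta=\mathrm{VMed}_{\boldsymbol{\lambda}}(\theta,\boldsymbol{\nu})$ and $\mu^\theta=\mathrm{HMed}_{\boldsymbol{\lambda}}(\theta,\boldsymbol{\nu})$. Then: (1) if $\nu_1,\dots,\nu_N$ are atomless, then so are $\nu^\theta$ and $\mu^\theta$; (2) if $\nu_1,\dots,\nu_N$ have connected supports, then so does $\mu^\theta$.
   Context: $\Delta_N$ is the unit simplex of $\mathbb{R}^N$; $\mathcal{P}_1(\mathbb{R})$ denotes Borel probability measures on $\mathbb{R}$ with finite first moment. For $\nu\in\mathcal{P}_1(\mathbb{R})$, $F_\nu(x)=\nu((-\infty,x])$ and $Q_\nu(t)=\inf\{x:F_\nu(x)\ge t\}$. For $\mathbf{x}\in\mathbb{R}^N$, $\mathrm{M}^-_{\boldsymbol{\lambda}}(\mathbf{x})=\inf\{y:\sum_{i:x_i\le y}\lambda_i\ge\frac12\}$, $\mathrm{M}^+_{\boldsymbol{\lambda}}(\mathbf{x})=\sup\{y:\sum_{i:x_i<y}\lambda_i\le\frac12\}$. $\mathrm{VMed}_{\boldsymbol{\lambda}}(\theta,\boldsymbol{\nu})$ is the probability measure with cdf $(1-\theta)\mathrm{M}^-_{\boldsymbol{\lambda}}(F_{\nu_1}(x),\dots,F_{\nu_N}(x))+\theta\mathrm{M}^+_{\boldsymbol{\lambda}}(F_{\nu_1}(x),\dots,F_{\nu_N}(x))$;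 $\mathrm{HMed}_{\boldsymbol{\lambda}}(\theta,\boldsymbol{\nu})$ is the probability measure whose quantile function on $(0,1)$ is $(1-\theta)\mathrm{M}^-_{\boldsymbol{\lambda}}(Q_{\nu_1}(t),\dots,Q_{\nu_N}(t))+\theta\mathrm{M}^+_{\boldsymbol{\lambda}}(Q_{\nu_1}(t),\dots,Q_{\nu_N}(t))$. *)

theory Defs
  imports "HOL-Probability.Probability"
begin

definition unit_simplex :: "nat \<Rightarrow> (nat \<Rightarrow> real) set" where
  "unit_simplex N = {l. (\<forall>i<N. 0 \<le> l i) \<and> (\<Sum>i<N. l i) = 1}"

definition P1 :: "real measure set" where
  "P1 = {M. prob_space M \<and> sets M = sets borel \<and> integrable M (\<lambda>x. \<bar>x\<bar>)}"

definition quantile :: "real measure \<Rightarrow> real \<Rightarrow> real" where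
  "quantile M t = Inf {x. cdf M x \<ge> t}"

definition Mminus :: "nat \<Rightarrow> (nat \<Rightarrow> real) \<Rightarrow> (nat \<Rightarrow> real) \<Rightarrow> real" where
  "Mminus N l x = Inf {y. (\<Sum>i\<in>{i. i < N \<and> x i \<le> y}. l i) \<ge> 1/2}"

definition Mplus :: "nat \<Rightarrow> (nat \<Rightarrow> real) \<Rightarrow> (nat \<Rightarrow> real) \<Rightarrow> real" where
  "Mplus N l x = Sup {y. (\<Sum>i\<in>{i. i < N \<and> x i < y}. l i) \<le> 1/2}"

definition is_VMed :: "nat \<Rightarrow> (nat \<Rightarrow> real) \<Rightarrow> real \<Rightarrow> (nat \<Rightarrow> real measure) \<Rightarrow> real measure \<Rightarrow> bool" where
  "is_VMed N l \<theta> nu M \<longleftrightarrow> prob_space M \<and> sets M = sets borel \<and>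
     (\<forall>x. cdf M x = (1 - \<theta>) * Mminus N l (\<lambda>i. cdf (nu i) x) + \<theta> * Mplus N l (\<lambda>i. cdf (nu i) x))"

definition is_HMed :: "nat \<Rightarrow> (nat \<Rightarrow> real) \<Rightarrow> real \<Rightarrow> (nat \<Rightarrow> real measure) \<Rightarrow> real measure \<Rightarrow> bool" where
  "is_HMed N l \<theta> nu M \<longleftrightarrow> prob_space M \<and> sets M = sets borel \<and>
     (\<forall>t\<in>{0<..<1}. quantile M t = (1 - \<theta>) * Mminus N l (\<lambda>i. quantile (nu i) t) + \<theta> * Mplus N l (\<lambda>i. quantile (nu i) t))"

definition atomless :: "real measure \<Rightarrow> bool" where
  "atomless M \<longleftrightarrow> (\<forall>x. emeasure M {x} = 0)"

definition msupp :: "real measure \<Rightarrow> real set" where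
  "msupp M = {x. \<forall>e>0. emeasure M (ball x e) > 0}"

end

(*
  The combination Mtheta = (1 - theta) M^- + theta M^+ of the lower and upper weighted
  medians is monotone and commutes with adding a constant to all arguments.  Hence it is
  1-Lipschitz for the sup norm, so it preserves (one-sided) limits, and it preserves strict
  componentwise inequalities.  For a real distribution, atomlessness means continuity of the
  cdf and, equivalently, strict monotonicity of the quantile function on (0,1); connectedness
  of the support means right-continuity of the quantile function (a gap in the support is a
  jump of the quantile).  Each of these properties therefore passes from the nu_i to the cdf of
  the vertical median and to the quantile function of the horizontal median.
*)
theory Submission
  imports Defs
begin

definition Mtheta :: "nat \<Rightarrow> (nat \<Rightarrow> real) \<Rightarrow> real \<Rightarrow> (nat \<Rightarrow> real) \<Rightarrow> real" where
  "Mtheta N l \<theta> x = (1 - \<theta>) * Mminus N l x + \<theta> * Mplus N l x"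

lemma unit_simplex_dim_pos: "l \<in> unit_simplex N \<Longrightarrow> 0 < N"
  by (cases N) (auto simp: unit_simplex_def)

lemma abs_le_sum_abs: "i < N \<Longrightarrow> \<bar>x i\<bar> \<le> (\<Sum>j<N. \<bar>x j\<bar>)"
  for x :: "nat \<Rightarrow> real"
  by (rule member_le_sum[of i "{..<N}" "\<lambda>j. \<bar>x j\<bar>"]) auto

lemma Mminus_set_nonempty_bdd_below:
  fixes x :: "nat \<Rightarrow> real"
  assumes "l \<in> unit_simplex N"
  shows "{y. (\<Sum>i\<in>{i. i < N \<and> x i \<le> y}. l i) \<ge> 1/2} \<noteq> {}"
    and "bdd_below {y. (\<Sum>i\<in>{i. i < N \<and> x i \<le> y}. l i) \<ge> 1/2}"
proof -
  let ?B = "\<Sum>j<N. \<bar>x j\<bar>"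
  have "{i. i < N \<and> x i \<le> ?B} = {..<N}"
    using abs_le_sum_abs[of _ N x] by force
  with assms show "{y. (\<Sum>i\<in>{i. i < N \<and> x i \<le> y}. l i) \<ge> 1/2} \<noteq> {}"
    by (auto simp: unit_simplex_def intro!: exI[of _ ?B])
  have "- ?B - 1 \<le> y" if "(\<Sum>i\<in>{i. i < N \<and> x i \<le> y}. l i) \<ge> 1/2" for y
  proof (rule ccontr)
    assume "\<not> - ?B - 1 \<le> y"
    then have "{i. i < N \<and> x i \<le> y} = {}"
      using abs_le_sum_abs[of _ N x] by force
    with that show False by simp
  qed
  then show "bdd_below {y. (\<Sum>i\<in>{i. i < N \<and> x i \<le> y}. l i) \<ge> 1/2}"
    by (rule bdd_belowI[of _ "- ?B - 1"]) simp
qed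

lemma Mplus_set_nonempty_bdd_above:
  fixes x :: "nat \<Rightarrow> real"
  assumes "l \<in> unit_simplex N"
  shows "{y. (\<Sum>i\<in>{i. i < N \<and> x i < y}. l i) \<le> 1/2} \<noteq> {}"
    and "bdd_above {y. (\<Sum>i\<in>{i. i < N \<and> x i < y}. l i) \<le> 1/2}"
proof -
  let ?B = "\<Sum>j<N. \<bar>x j\<bar>"
  have empty: "{i. i < N \<and> x i < - ?B} = {}"
    using abs_le_sum_abs[of _ N x] by force
  have "- ?B \<in> {y. (\<Sum>i\<in>{i. i < N \<and> x i < y}. l i) \<le> 1/2}"
    unfolding mem_Collect_eq empty by simp
  then show "{y. (\<Sum>i\<in>{i. i < N \<and> x i < y}. l i) \<le> 1/2} \<noteq> {}"
    by blast
  have "y \<le> ?B + 1" if "(\<Sum>i\<in>{i. i < N \<and> x i < y}. l i) \<le> 1/2" for y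
  proof (rule ccontr)
    assume "\<not> y \<le> ?B + 1"
    then have "{i. i < N \<and> x i < y} = {..<N}"
      using abs_le_sum_abs[of _ N x] by force
    with that assms show False by (simp add: unit_simplex_def)
  qed
  then show "bdd_above {y. (\<Sum>i\<in>{i. i < N \<and> x i < y}. l i) \<le> 1/2}"
    by (rule bdd_aboveI[of _ "?B + 1"]) simp
qed

lemma Mminus_le_shift:
  assumes l: "l \<in> unit_simplex N" and xy: "\<forall>i<N. x i \<le> y i + c"
  shows "Mminus N l x \<le> Mminus N l y + c"
proof -
  have "Mminus N l x \<le> z + c" if z: "(\<Sum>i\<in>{i. i < N \<and> y i \<le> z}. l i) \<ge> 1/2" for z
  proof -
    have "(\<Sum>i\<in>{i. i < N \<and> y i \<le> z}. l i) \<le> (\<Sum>i\<in>{i. i < N \<and> x i \<le> z + c}. l i)"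
      using xy l by (intro sum_mono2) (force simp: unit_simplex_def)+
    with z show ?thesis
      unfolding Mminus_def by (intro cInf_lower Mminus_set_nonempty_bdd_below(2)[OF l]) simp
  qed
  then have "Mminus N l x - c \<le> Mminus N l y"
    unfolding Mminus_def[of N l y]
    by (intro cInf_greatest Mminus_set_nonempty_bdd_below(1)[OF l]) (simp add: algebra_simps)
  then show ?thesis by simp
qed

lemma Mplus_le_shift:
  assumes l: "l \<in> unit_simplex N" and xy: "\<forall>i<N. x i \<le> y i + c"
  shows "Mplus N l x \<le> Mplus N l y + c"
proof -
  have "z - c \<le> Mplus N l y" if z: "(\<Sum>i\<in>{i. i < N \<and> x i < z}. l i) \<le> 1/2" for z
  proof -
    have "(\<Sum>i\<in>{i. i < N \<and> y i < z - c}. l i) \<le> (\<Sum>i\<in>{i. i < N \<and> x i < z}. l i)"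
      using xy l by (intro sum_mono2) (force simp: unit_simplex_def)+
    with z show ?thesis
      unfolding Mplus_def by (intro cSup_upper Mplus_set_nonempty_bdd_above(2)[OF l]) simp
  qed
  then show ?thesis
    unfolding Mplus_def[of N l x]
    by (intro cSup_least Mplus_set_nonempty_bdd_above(1)[OF l]) (simp add: algebra_simps)
qed

lemma Mtheta_le_shift:
  assumes "l \<in> unit_simplex N" "0 \<le> \<theta>" "\<theta> \<le> 1" "\<forall>i<N. x i \<le> y i + c"
  shows "Mtheta N l \<theta> x \<le> Mtheta N l \<theta> y + c"
proof -
  have "(1 - \<theta>) * Mminus N l x \<le> (1 - \<theta>) * (Mminus N l y + c)"
    using Mminus_le_shift assms by (intro mult_left_mono) auto
  moreover have "\<theta> * Mplus N l x \<le> \<theta> * (Mplus N l y + c)"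
    using Mplus_le_shift assms by (intro mult_left_mono) auto
  ultimately show ?thesis
    unfolding Mtheta_def by (simp add: algebra_simps)
qed

lemma Mtheta_strict_mono:
  assumes l: "l \<in> unit_simplex N" and "0 \<le> \<theta>" "\<theta> \<le> 1" and xy: "\<forall>i<N. x i < y i"
  shows "Mtheta N l \<theta> x < Mtheta N l \<theta> y"
proof -
  define d where "d = Min ((\<lambda>i. y i - x i) ` {..<N})"
  have "0 < d"
    unfolding d_def using unit_simplex_dim_pos[OF l] xy by (subst Min_gr_iff) auto
  have "\<forall>i<N. x i \<le> y i + - d"
  proof (intro allI impI)
    fix i assume "i < N"
    then have "d \<le> y i - x i"
      unfolding d_def by (intro Min_le) auto
    then show "x i \<le> y i + - d" by simp
  qed
  then have "Mtheta N l \<theta> x \<le> Mtheta N l \<theta> y + - d"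
    using Mtheta_le_shift assms by blast
  with \<open>0 < d\<close> show ?thesis by simp
qed

lemma tendsto_Mtheta:
  assumes "l \<in> unit_simplex N" "0 \<le> \<theta>" "\<theta> \<le> 1"
    and lim: "\<forall>i<N. ((\<lambda>y. f i y) \<longlongrightarrow> f i x) F"
  shows "((\<lambda>y. Mtheta N l \<theta> (\<lambda>i. f i y)) \<longlongrightarrow> Mtheta N l \<theta> (\<lambda>i. f i x)) F"
proof -
  define g where "g y = (\<Sum>i<N. \<bar>f i y - f i x\<bar>)" for y
  have g_lim: "(g \<longlongrightarrow> 0) F"
    unfolding g_def using lim by (intro tendsto_null_sum tendsto_rabs_zero LIM_zero) auto
  have bound: "norm (Mtheta N l \<theta> (\<lambda>i. f i y) - Mtheta N l \<theta> (\<lambda>i. f i x)) \<le> g y" for y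
  proof -
    have "\<forall>i<N. \<bar>f i y - f i x\<bar> \<le> g y"
      unfolding g_def using abs_le_sum_abs[of _ N "\<lambda>i. f i y - f i x"] by simp
    then have "\<forall>i<N. f i y \<le> f i x + g y" "\<forall>i<N. f i x \<le> f i y + g y"
      by (simp_all add: abs_diff_le_iff diff_le_eq add.commute)
    from this[THEN Mtheta_le_shift[OF assms(1-3)]] show ?thesis
      by simp
  qed
  show ?thesis
    using Lim_null_comparison[OF always_eventually[OF allI[OF bound]] g_lim]
    by (rule LIM_zero_cancel)
qed

context real_distribution
begin

lemma quantile_set_nonempty_bdd_below:
  assumes "0 < t" "t < 1"
  shows "{x. t \<le> cdf M x} \<noteq> {}" and "bdd_below {x. t \<le> cdf M x}"
proof -
  have "eventually (\<lambda>x. t < cdf M x) at_top"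
    using order_tendstoD(1)[OF cdf_lim_at_top_prob \<open>t < 1\<close>] .
  then obtain x where "t < cdf M x"
    by (metis eventually_at_top_linorder order_refl)
  then show "{x. t \<le> cdf M x} \<noteq> {}" by (auto intro!: exI[of _ x])
  have "eventually (\<lambda>x. cdf M x < t) at_bot"
    using order_tendstoD(2)[OF cdf_lim_at_bot \<open>0 < t\<close>] .
  then obtain b where b: "\<And>x. x \<le> b \<Longrightarrow> cdf M x < t"
    by (metis eventually_at_bot_linorder)
  show "bdd_below {x. t \<le> cdf M x}"
  proof (rule bdd_belowI[of _ b])
    fix x assume "x \<in> {x. t \<le> cdf M x}"
    then show "b \<le> x" using b[of x] by (cases "x \<le> b") auto
  qed
qed

lemma cdf_quantile_ge:
  assumes t: "0 < t" "t < 1"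
  shows "t \<le> cdf M (quantile M t)"
proof -
  let ?q = "quantile M t"
  have above: "t \<le> cdf M y" if "?q < y" for y
  proof -
    from that obtain x where "t \<le> cdf M x" "x < y"
      unfolding quantile_def using cInf_less_iff[OF quantile_set_nonempty_bdd_below[OF t]] by auto
    then show ?thesis using cdf_nondecreasing[of x y] by simp
  qed
  have "eventually (\<lambda>y. t \<le> cdf M y) (at_right ?q)"
    using eventually_at_right_less by (rule eventually_mono) (rule above)
  moreover have "(cdf M \<longlongrightarrow> cdf M ?q) (at_right ?q)"
    using cdf_is_right_cont by (simp add: continuous_within)
  ultimately show ?thesis
    by (intro tendsto_lowerbound) auto
qed

lemma quantile_le_iff:
  assumes "0 < t" "t < 1"
  shows "quantile M t \<le> x \<longleftrightarrow> t \<le> cdf M x"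
proof
  assume "quantile M t \<le> x"
  then show "t \<le> cdf M x"
    using cdf_quantile_ge[OF assms] cdf_nondecreasing order_trans by blast
next
  assume "t \<le> cdf M x"
  then show "quantile M t \<le> x"
    unfolding quantile_def by (intro cInf_lower quantile_set_nonempty_bdd_below(2)[OF assms]) simp
qed

lemma quantile_mono: "0 < s \<Longrightarrow> s \<le> t \<Longrightarrow> t < 1 \<Longrightarrow> quantile M s \<le> quantile M t"
  using quantile_le_iff[of s "quantile M t"] cdf_quantile_ge[of t] by auto

lemma cdf_eq_measure_lessThan_plus_atom: "cdf M x = measure M {..<x} + measure M {x}"
proof -
  have "{..x} = {..<x} \<union> {x}" by auto
  then show ?thesis
    unfolding cdf_def2 by (subst finite_measure_Union[symmetric]) auto
qed

lemma in_msupp_iff_cdf_less: "x \<in> msupp M \<longleftrightarrow> (\<forall>e>0. cdf M (x - e) < cdf M (x + e))"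
proof -
  have interval: "cdf M (x + e) - cdf M (x - e) = measure M {x - e<..x + e}" if "e > 0" for e
    using cdf_diff_eq[of "x - e" "x + e"] that by simp
  have "x \<in> msupp M \<longleftrightarrow> (\<forall>e>0. 0 < measure M {x - e<..<x + e})"
    unfolding msupp_def ball_eq_greaterThanLessThan by (simp add: emeasure_eq_measure)
  also have "\<dots> \<longleftrightarrow> (\<forall>e>0. 0 < measure M {x - e<..x + e})"
  proof safe
    fix e :: real assume "\<forall>e>0. 0 < measure M {x - e<..<x + e}" "e > 0"
    then show "0 < measure M {x - e<..x + e}"
      using finite_measure_mono[of "{x - e<..<x + e}" "{x - e<..x + e}"] by force
  next
    fix e :: real assume "\<forall>e>0. 0 < measure M {x - e<..x + e}" "e > 0"
    then have "0 < measure M {x - e/2<..x + e/2}" by simp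
    also have "\<dots> \<le> measure M {x - e<..<x + e}"
      using \<open>e > 0\<close> by (intro finite_measure_mono) auto
    finally show "0 < measure M {x - e<..<x + e}" .
  qed
  also have "\<dots> \<longleftrightarrow> (\<forall>e>0. cdf M (x - e) < cdf M (x + e))"
    by (simp add: interval[symmetric])
  finally show ?thesis .
qed

lemma quantile_in_msupp:
  assumes "0 < t" "t < 1"
  shows "quantile M t \<in> msupp M"
  unfolding in_msupp_iff_cdf_less
proof safe
  fix e :: real assume "e > 0"
  then have "cdf M (quantile M t - e) < t"
    using quantile_le_iff[OF assms, of "quantile M t - e"] by simp
  also have "t \<le> cdf M (quantile M t + e)"
    using quantile_le_iff[OF assms, of "quantile M t + e"] \<open>e > 0\<close> by simp
  finally show "cdf M (quantile M t - e) < cdf M (quantile M t + e)" .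
qed

lemma atomless_iff_isCont_cdf: "atomless M \<longleftrightarrow> (\<forall>x. isCont (cdf M) x)"
  unfolding atomless_def isCont_cdf by (simp add: emeasure_eq_measure)

lemma atomless_iff_strict_mono_on_quantile:
  "atomless M \<longleftrightarrow> strict_mono_on {0<..<1} (quantile M)"
proof
  assume atomless: "atomless M"
  show "strict_mono_on {0<..<1} (quantile M)"
  proof (rule strict_mono_onI, rule ccontr)
    fix s t :: real assume st: "s \<in> {0<..<1}" "t \<in> {0<..<1}" "s < t"
      and "\<not> quantile M s < quantile M t"
    then have "quantile M t \<le> quantile M s" by simp
    then have "t \<le> cdf M (quantile M s)"
      using quantile_le_iff st by simp
    moreover have "measure M {..<quantile M s} \<le> s"
    proof (rule tendsto_upperbound[OF cdf_at_left])
      have "cdf M x \<le> s" if "x < quantile M s" for x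
        using quantile_le_iff[of s x] st that by simp
      then show "eventually (\<lambda>x. cdf M x \<le> s) (at_left (quantile M s))"
        by (simp add: eventually_at_left_field) (use lt_ex in blast)
    qed simp
    moreover have "measure M {quantile M s} = 0"
      using atomless by (simp add: atomless_def emeasure_eq_measure)
    ultimately show False
      using cdf_eq_measure_lessThan_plus_atom[of "quantile M s"] \<open>s < t\<close> by simp
  qed
next
  assume strict: "strict_mono_on {0<..<1} (quantile M)"
  show "atomless M"
    unfolding atomless_def
  proof (rule allI, rule ccontr)
    fix a assume "emeasure M {a} \<noteq> 0"
    then have m: "0 < measure M {a}"
      by (simp add: emeasure_eq_measure zero_less_measure_iff)
    \<comment> \<open>The atom makes the quantile constant, equal to a, on (cdf M a - measure M {a}, cdf M a].\<close>
    define s where "s = cdf M a - 2 * measure M {a} / 3"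
    define t where "t = cdf M a - measure M {a} / 3"
    have split: "cdf M a = measure M {..<a} + measure M {a}"
      by (rule cdf_eq_measure_lessThan_plus_atom)
    then have st: "0 < s" "s < t" "t < 1"
      using m cdf_bounded_prob[of a] measure_nonneg[of M "{..<a}"]
      unfolding s_def t_def by linarith+
    have "quantile M t \<le> a"
      using quantile_le_iff[of t a] st m unfolding t_def by simp
    moreover have "a \<le> quantile M s"
    proof (rule ccontr)
      assume "\<not> a \<le> quantile M s"
      then have "cdf M (quantile M s) \<le> measure M {..<a}"
        unfolding cdf_def2 by (intro finite_measure_mono) auto
      moreover have "s \<le> cdf M (quantile M s)"
        using cdf_quantile_ge st by simp
      ultimately show False
        using split m unfolding s_def by simp
    qed
    moreover have "quantile M s < quantile M t"
      using strict st by (auto intro: strict_mono_onD)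
    ultimately show False by simp
  qed
qed

lemma quantile_right_approx_if_connected_msupp:
  assumes conn: "connected (msupp M)" and p: "0 < p" "p < 1" and "\<eta> > 0"
  shows "\<exists>t\<in>{p<..<1}. quantile M t \<le> quantile M p + \<eta>"
proof (rule ccontr)
  assume "\<not> ?thesis"
  then have far: "quantile M p + \<eta> < quantile M t" if "p < t" "t < 1" for t
    using that by force
  let ?q = "quantile M p"
  have "?q + \<eta>/2 \<in> msupp M"
  proof (rule conn[unfolded connected_iff_interval, rule_format])
    show "?q \<in> msupp M" "quantile M ((p + 1) / 2) \<in> msupp M"
      using quantile_in_msupp p by simp_all
    show "?q \<le> ?q + \<eta>/2" "?q + \<eta>/2 \<le> quantile M ((p + 1) / 2)"
      using far[of "(p + 1) / 2"] p \<open>\<eta> > 0\<close> by simp_all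
  qed
  moreover have "\<eta>/2 > 0"
    using \<open>\<eta> > 0\<close> by simp
  ultimately have "cdf M (?q + \<eta>/2 - \<eta>/2) < cdf M (?q + \<eta>/2 + \<eta>/2)"
    unfolding in_msupp_iff_cdf_less by blast
  then have "cdf M ?q < cdf M (?q + \<eta>)"
    by (simp add: add.commute)
  define t where "t = (cdf M ?q + cdf M (?q + \<eta>)) / 2"
  have "p \<le> cdf M ?q"
    using cdf_quantile_ge p by simp
  then have "p < t" "t < 1" "t \<le> cdf M (?q + \<eta>)"
    using \<open>cdf M ?q < cdf M (?q + \<eta>)\<close> cdf_bounded_prob[of "?q + \<eta>"] unfolding t_def by auto
  then show False
    using far[of t] quantile_le_iff[of t "?q + \<eta>"] p by simp
qed

lemma tendsto_quantile_at_right_if_connected_msupp: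
  assumes conn: "connected (msupp M)" and p: "0 < p" "p < 1"
  shows "(quantile M \<longlongrightarrow> quantile M p) (at_right p)"
proof (rule order_tendstoI)
  fix a assume "a < quantile M p"
  have "a < quantile M t" if "p < t" "t < 1" for t
    using quantile_mono[of p t] p that \<open>a < quantile M p\<close> by simp
  then show "eventually (\<lambda>t. a < quantile M t) (at_right p)"
    unfolding eventually_at_right_field using p by auto
next
  fix a assume "quantile M p < a"
  then obtain b where b: "p < b" "b < 1" "quantile M b \<le> quantile M p + (a - quantile M p) / 2"
    using quantile_right_approx_if_connected_msupp[OF conn p, of "(a - quantile M p) / 2"] by auto
  have "quantile M t < a" if "p < t" "t < b" for t
  proof -
    have "quantile M t \<le> quantile M b"
      using quantile_mono[of t b] p b that by simp
    then show ?thesis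
      using b(3) \<open>quantile M p < a\<close> by (simp add: field_simps)
  qed
  then show "eventually (\<lambda>t. quantile M t < a) (at_right p)"
    unfolding eventually_at_right_field using b by auto
qed

lemma quantile_jump_at_msupp_gap:
  assumes a: "a \<in> msupp M" and b: "b \<in> msupp M" and "a < c" "c < b" "c \<notin> msupp M"
  obtains p e where "0 < p" "p < 1" "0 < e"
    "\<And>t. p < t \<Longrightarrow> t < 1 \<Longrightarrow> quantile M p + e < quantile M t"
proof -
  from \<open>c \<notin> msupp M\<close> obtain e0 where "e0 > 0" "cdf M (c + e0) \<le> cdf M (c - e0)"
    unfolding in_msupp_iff_cdf_less by auto
  define e where "e = min e0 (min (c - a) (b - c))"
  have e: "0 < e" "e \<le> e0" "a + e \<le> c" "c \<le> b - e"
    using \<open>e0 > 0\<close> \<open>a < c\<close> \<open>c < b\<close> unfolding e_def by auto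
  define p where "p = cdf M c"
  have gap: "cdf M (c - e) = p" "cdf M (c + e) = p"
    using cdf_nondecreasing[of "c - e0" "c - e"] cdf_nondecreasing[of "c - e" c]
      cdf_nondecreasing[of c "c + e"] cdf_nondecreasing[of "c + e" "c + e0"]
      \<open>cdf M (c + e0) \<le> cdf M (c - e0)\<close> e unfolding p_def by linarith+
  have "0 < p"
    using a e cdf_nonneg[of "a - e"] cdf_nondecreasing[of "a + e" c]
    unfolding in_msupp_iff_cdf_less p_def by force
  have "p < 1"
    using b e cdf_bounded_prob[of "b + e"] cdf_nondecreasing[of c "b - e"]
    unfolding in_msupp_iff_cdf_less p_def by force
  have "quantile M p \<le> c - e"
    using quantile_le_iff[of p "c - e"] gap \<open>0 < p\<close> \<open>p < 1\<close> by simp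
  then have "quantile M p + 2 * e < quantile M t" if "p < t" "t < 1" for t
    using quantile_le_iff[of t "c + e"] \<open>0 < p\<close> gap that by auto
  with \<open>0 < p\<close> \<open>p < 1\<close> \<open>0 < e\<close> show ?thesis
    using that[of p "2 * e"] by simp
qed

lemma connected_msupp_iff_quantile_right_cont:
  "connected (msupp M) \<longleftrightarrow> (\<forall>p\<in>{0<..<1}. (quantile M \<longlongrightarrow> quantile M p) (at_right p))"
proof
  show "\<forall>p\<in>{0<..<1}. (quantile M \<longlongrightarrow> quantile M p) (at_right p)" if "connected (msupp M)"
    using tendsto_quantile_at_right_if_connected_msupp[OF that] by simp
next
  assume right_cont: "\<forall>p\<in>{0<..<1}. (quantile M \<longlongrightarrow> quantile M p) (at_right p)"
  show "connected (msupp M)"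
    unfolding connected_iff_interval
  proof (intro ballI allI impI, rule ccontr)
    fix a b c assume supp: "a \<in> msupp M" "b \<in> msupp M" and "a \<le> c" "c \<le> b"
      and gap: "c \<notin> msupp M"
    then have "a < c" "c < b"
      by (metis order_le_less)+
    then obtain p e where p: "0 < p" "p < 1" and "0 < e"
      and jump: "\<And>t. p < t \<Longrightarrow> t < 1 \<Longrightarrow> quantile M p + e < quantile M t"
      using quantile_jump_at_msupp_gap[OF supp _ _ gap] by blast
    have "eventually (\<lambda>t. p < t \<and> t < 1) (at_right p)"
      using \<open>p < 1\<close> unfolding eventually_at_right_field by auto
    moreover have "eventually (\<lambda>t. quantile M t < quantile M p + e) (at_right p)"
      using right_cont p \<open>0 < e\<close> by (intro order_tendstoD(2)) auto
    ultimately have "eventually (\<lambda>t. (p < t \<and> t < 1) \<and> quantile M t < quantile M p + e) (at_right p)"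
      by (rule eventually_conj)
    then obtain t where "p < t" "t < 1" "quantile M t < quantile M p + e"
      using eventually_happens'[OF trivial_limit_at_right_real] by blast
    then show False
      using jump[of t] by simp
  qed
qed

end

lemma P1_real_distribution: "M \<in> P1 \<Longrightarrow> real_distribution M"
  unfolding P1_def real_distribution_def real_distribution_axioms_def by auto

lemma is_VMed_real_distribution: "is_VMed N l \<theta> nu M \<Longrightarrow> real_distribution M"
  unfolding is_VMed_def real_distribution_def real_distribution_axioms_def by auto

lemma is_HMed_real_distribution: "is_HMed N l \<theta> nu M \<Longrightarrow> real_distribution M"
  unfolding is_HMed_def real_distribution_def real_distribution_axioms_def by auto

lemma is_VMed_atomless:
  assumes "l \<in> unit_simplex N" "0 \<le> \<theta>" "\<theta> \<le> 1" and VMed: "is_VMed N l \<theta> nu M"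
    and nu: "\<And>i. i < N \<Longrightarrow> real_distribution (nu i)" "\<forall>i<N. atomless (nu i)"
  shows "atomless M"
proof -
  have cdf_M: "cdf M = (\<lambda>x. Mtheta N l \<theta> (\<lambda>i. cdf (nu i) x))"
    using VMed unfolding is_VMed_def Mtheta_def by auto
  have "\<forall>i<N. (cdf (nu i) \<longlongrightarrow> cdf (nu i) x) (at x)" for x
    using nu real_distribution.atomless_iff_isCont_cdf by (auto simp: isCont_def)
  then have "isCont (cdf M) x" for x
    unfolding isCont_def cdf_M by (rule tendsto_Mtheta[OF assms(1-3), where f = "\<lambda>i. cdf (nu i)"])
  then show ?thesis
    using real_distribution.atomless_iff_isCont_cdf[OF is_VMed_real_distribution[OF VMed]] by blast
qed

lemma is_HMed_atomless:
  assumes "l \<in> unit_simplex N" "0 \<le> \<theta>" "\<theta> \<le> 1" and HMed: "is_HMed N l \<theta> nu M"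
    and nu: "\<And>i. i < N \<Longrightarrow> real_distribution (nu i)" "\<forall>i<N. atomless (nu i)"
  shows "atomless M"
proof -
  have "\<forall>i<N. strict_mono_on {0<..<1} (quantile (nu i))"
    using nu real_distribution.atomless_iff_strict_mono_on_quantile by blast
  then have "strict_mono_on {0<..<1} (\<lambda>t. Mtheta N l \<theta> (\<lambda>i. quantile (nu i) t))"
    by (auto intro!: strict_mono_onI Mtheta_strict_mono[OF assms(1-3)] dest: strict_mono_onD)
  moreover have "\<forall>t\<in>{0<..<1}. quantile M t = Mtheta N l \<theta> (\<lambda>i. quantile (nu i) t)"
    using HMed unfolding is_HMed_def Mtheta_def by auto
  ultimately show ?thesis
    unfolding real_distribution.atomless_iff_strict_mono_on_quantile[OF is_HMed_real_distribution[OF HMed]]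
    by (simp add: strict_mono_on_def)
qed

lemma is_HMed_connected_msupp:
  assumes "l \<in> unit_simplex N" "0 \<le> \<theta>" "\<theta> \<le> 1" and HMed: "is_HMed N l \<theta> nu M"
    and nu: "\<And>i. i < N \<Longrightarrow> real_distribution (nu i)" "\<forall>i<N. connected (msupp (nu i))"
  shows "connected (msupp M)"
  unfolding real_distribution.connected_msupp_iff_quantile_right_cont[OF is_HMed_real_distribution[OF HMed]]
proof
  fix p :: real assume p: "p \<in> {0<..<1}"
  have HMed_eq: "quantile M t = Mtheta N l \<theta> (\<lambda>i. quantile (nu i) t)" if "t \<in> {0<..<1}" for t
    using HMed that unfolding is_HMed_def Mtheta_def by auto
  have "\<forall>i<N. (quantile (nu i) \<longlongrightarrow> quantile (nu i) p) (at_right p)"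
    using nu p real_distribution.connected_msupp_iff_quantile_right_cont by blast
  then have "((\<lambda>t. Mtheta N l \<theta> (\<lambda>i. quantile (nu i) t)) \<longlongrightarrow> quantile M p) (at_right p)"
    using tendsto_Mtheta[OF assms(1-3)] HMed_eq[OF p] by simp
  moreover have "eventually (\<lambda>t. quantile M t = Mtheta N l \<theta> (\<lambda>i. quantile (nu i) t)) (at_right p)"
    using p HMed_eq unfolding eventually_at_right_field by auto
  ultimately show "(quantile M \<longlongrightarrow> quantile M p) (at_right p)"
    using tendsto_cong by fastforce
qed

theorem lemma4p5:
  fixes N :: nat and l :: "nat \<Rightarrow> real" and nu :: "nat \<Rightarrow> real measure"
    and \<theta> :: real and nt mt :: "real measure"
  assumes "l \<in> unit_simplex N"
    and "\<forall>i<N. nu i \<in> P1"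
    and "0 \<le> \<theta>" and "\<theta> \<le> 1"
    and "is_VMed N l \<theta> nu nt"
    and "is_HMed N l \<theta> nu mt"
  shows "((\<forall>i<N. atomless (nu i)) \<longrightarrow> atomless nt \<and> atomless mt)
       \<and> ((\<forall>i<N. connected (msupp (nu i))) \<longrightarrow> connected (msupp mt))"
proof -
  have nu: "real_distribution (nu i)" if "i < N" for i
    using assms(2) that P1_real_distribution by blast
  show ?thesis
    using is_VMed_atomless[OF assms(1,3,4,5) nu] is_HMed_atomless[OF assms(1,3,4,6) nu]
      is_HMed_connected_msupp[OF assms(1,3,4,6) nu] by blast
qed

end
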